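(* Let $(P,A,\lambda)$ be a marked poset. Then all marked chain-order polytopes $\mathcal{CO}_{U_1,U_2}(\lambda)$, for $(U_1,U_2)$ ranging over the admissible decompositions of $(P,A,\lambda)$, are Ehrhart equivalent, i.e. they have the same Ehrhart polynomial; equivalently, for every admissible decomposition $(U_1,U_2)$ and every $n\in\mathbb{N}$, $|S_{U_1,U_2}(n\lambda)|=|S_{P\setminus A,\emptyset}(n\lambda)|$.
   Context: A marked poset is a triple $(P,A,\lambda)$ where $(P,\prec)$ is a finite poset, $A\subseteq P$ contains all minimal and all maximal elements of $P$, and $\lambda:A\to\mathbb{Z}_{\ge 0}$, $a\mapsto\lambda_a$. A decomposition of $(P,A,\lambda)$ is a pair $(U_1,U_2)$ of disjoint sets with $U_1\cup U_2=P\setminus A$; it is admissible if there are no $u_1\in U_1$, $u_2\in U_2$ with $u_1\prec u_2$. Put $A_1=A\cup U_1$. The marked chain-order polytope $\mathcal{CO}_{U_1,U_2}(\lambda)\subset\mathbb{R}^{P\setminus A}$ is the set of $(x_p)_{p\in P\setminus A}$ such that: (i) $x_p\le\lambda_a$ whenever $p\in U_1$, $a\in A$, $p\prec a$; (ii) $\lambda_b\le x_q$ whenever $q\in U_1$, $b\in A$, $b\prec q$; (iii) $x_p\le x_q$ whenever $p,q\in U_1$, $p\prec q$; (iv) $x_p\ge0$ for $p\in U_2$; (v) for every chain $b\prec p_n\prec\cdots\prec p_1\prec a$ with $n\ge1$, $a,b\in A_1$, $p_i\in U_2$: $x_{p_1}+\cdots+x_{p_n}\le\lambda_a-\lambda_b$,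 where $\lambda_q$ means $x_q$ for $q\in U_1$; (vi) for every chain $p_1\prec\cdots\prec p_s\prec q$ with $q\in U_1$, $p_i\in U_2$: $x_{p_1}+\cdots+x_{p_s}\le x_q$. Set $S_{U_1,U_2}(\lambda)=\mathcal{CO}_{U_1,U_2}(\lambda)\cap\mathbb{Z}_{\ge0}^{P\setminus A}$. These polytopes are lattice polytopes. $\mathcal{CO}_{P\setminus A,\emptyset}(\lambda)$ is the marked order polytope. *)

theory Defs
  imports Complex_Main
begin

text \<open>A marked poset (P, A, lambda): A contains all minimal and maximal elements of P;
  lambda : A -> nonnegative integers is modelled as a function to nat
  (only its values on A matter).\<close>

definition strict_poset :: "'a set \<Rightarrow> ('a \<Rightarrow> 'a \<Rightarrow> bool) \<Rightarrow> bool" where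
  "strict_poset P rel \<longleftrightarrow>
     (\<forall>p\<in>P. \<not> rel p p) \<and>
     (\<forall>p\<in>P. \<forall>q\<in>P. \<forall>r\<in>P. rel p q \<longrightarrow> rel q r \<longrightarrow> rel p r)"

definition minimal_elem :: "'a set \<Rightarrow> ('a \<Rightarrow> 'a \<Rightarrow> bool) \<Rightarrow> 'a \<Rightarrow> bool" where
  "minimal_elem P rel p \<longleftrightarrow> p \<in> P \<and> (\<forall>q\<in>P. \<not> rel q p)"

definition maximal_elem :: "'a set \<Rightarrow> ('a \<Rightarrow> 'a \<Rightarrow> bool) \<Rightarrow> 'a \<Rightarrow> bool" where
  "maximal_elem P rel p \<longleftrightarrow> p \<in> P \<and> (\<forall>q\<in>P. \<not> rel p q)"

definition marked_poset :: "'a set \<Rightarrow> ('a \<Rightarrow> 'a \<Rightarrow> bool) \<Rightarrow> 'a set \<Rightarrow> bool" where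
  "marked_poset P rel A \<longleftrightarrow> finite P \<and> strict_poset P rel \<and> A \<subseteq> P \<and>
     (\<forall>p. minimal_elem P rel p \<longrightarrow> p \<in> A) \<and>
     (\<forall>p. maximal_elem P rel p \<longrightarrow> p \<in> A)"

definition admissible_decomp ::
  "'a set \<Rightarrow> ('a \<Rightarrow> 'a \<Rightarrow> bool) \<Rightarrow> 'a set \<Rightarrow> 'a set \<Rightarrow> 'a set \<Rightarrow> bool" where
  "admissible_decomp P rel A U1 U2 \<longleftrightarrow>
     U1 \<inter> U2 = {} \<and> U1 \<union> U2 = P - A \<and>
     \<not> (\<exists>u1\<in>U1. \<exists>u2\<in>U2. rel u1 u2)"

text \<open>A chain p_1 < ... < p_k is a list sorted strictly w.r.t. rel (listed increasingly).\<close>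

text \<open>Points of R^(P - A) are real-valued functions on 'a that vanish outside P - A.
  The value lambda_q of condition (v): x_q if q in U1, lambda_q otherwise.\<close>

definition mval :: "'a set \<Rightarrow> ('a \<Rightarrow> nat) \<Rightarrow> ('a \<Rightarrow> real) \<Rightarrow> 'a \<Rightarrow> real" where
  "mval U1 lam x q = (if q \<in> U1 then x q else real (lam q))"

definition chain_order_polytope ::
  "'a set \<Rightarrow> ('a \<Rightarrow> 'a \<Rightarrow> bool) \<Rightarrow> 'a set \<Rightarrow> ('a \<Rightarrow> nat) \<Rightarrow> 'a set \<Rightarrow> 'a set
     \<Rightarrow> ('a \<Rightarrow> real) set" where
  "chain_order_polytope P rel A lam U1 U2 = {x.
     (\<forall>p. p \<notin> P - A \<longrightarrow> x p = 0) \<and>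
     \<comment> \<open>(i)\<close>
     (\<forall>p\<in>U1. \<forall>a\<in>A. rel p a \<longrightarrow> x p \<le> real (lam a)) \<and>
     \<comment> \<open>(ii)\<close>
     (\<forall>q\<in>U1. \<forall>b\<in>A. rel b q \<longrightarrow> real (lam b) \<le> x q) \<and>
     \<comment> \<open>(iii)\<close>
     (\<forall>p\<in>U1. \<forall>q\<in>U1. rel p q \<longrightarrow> x p \<le> x q) \<and>
     \<comment> \<open>(iv)\<close>
     (\<forall>p\<in>U2. 0 \<le> x p) \<and>
     \<comment> \<open>(v): chains b < p_n < ... < p_1 < a, n >= 1, a b in A1 = A union U1, p_i in U2\<close>
     (\<forall>ps a b. ps \<noteq> [] \<and> set ps \<subseteq> U2 \<and> sorted_wrt rel ps \<and>
        a \<in> A \<union> U1 \<and> b \<in> A \<union> U1 \<and> rel b (hd ps) \<and> rel (last ps) a \<longrightarrow>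
        sum_list (map x ps) \<le> mval U1 lam x a - mval U1 lam x b) \<and>
     \<comment> \<open>(vi): chains p_1 < ... < p_s < q, q in U1, p_i in U2\<close>
     (\<forall>ps q. ps \<noteq> [] \<and> set ps \<subseteq> U2 \<and> sorted_wrt rel ps \<and>
        q \<in> U1 \<and> rel (last ps) q \<longrightarrow>
        sum_list (map x ps) \<le> x q)}"

definition lattice_points_CO ::
  "'a set \<Rightarrow> ('a \<Rightarrow> 'a \<Rightarrow> bool) \<Rightarrow> 'a set \<Rightarrow> ('a \<Rightarrow> nat) \<Rightarrow> 'a set \<Rightarrow> 'a set
     \<Rightarrow> ('a \<Rightarrow> real) set" where
  "lattice_points_CO P rel A lam U1 U2 =
     {x \<in> chain_order_polytope P rel A lam U1 U2.
        \<forall>p\<in>P - A. x p \<in> \<int> \<and> 0 \<le> x p}"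

end

theory Submission
  imports Defs
begin

text \<open>The transfer map \<open>x\<^sub>p = y\<^sub>p - max\<^sub>q\<^sub><\<^sub>p y\<^sub>q\<close> on \<open>U\<^sub>2\<close> (with \<open>y\<^sub>q = \<lambda>\<^sub>q\<close> on \<open>A\<close>), identity on
  \<open>U\<^sub>1\<close>, is a bijection from the lattice points of the marked order polytope onto those of
  the marked chain-order polytope, for every marking \<open>\<lambda>\<close>. Its inverse is the recursion
  \<open>y\<^sub>p = x\<^sub>p + max\<^sub>q\<^sub><\<^sub>p y\<^sub>q\<close> along the well-founded order. Unfolding the recursion gives
  \<open>y\<^sub>p = y\<^sub>b + x\<^sub>p\<^sub>1 + \<dots> + x\<^sub>p\<^sub>k\<close> for a chain \<open>b < p\<^sub>1 < \<dots> < p\<^sub>k = p\<close> with \<open>b \<in> A \<union> U\<^sub>1\<close>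
  and all \<open>p\<^sub>i \<in> U\<^sub>2\<close>, so the chain inequalities of the chain-order polytope make \<open>y\<close>
  order-preserving; conversely, for order-preserving \<open>y\<close> they follow by telescoping.\<close>

lemma wf_strict_poset:
  assumes "finite P" and "strict_poset P rel"
  shows "wf {(q, p). q \<in> P \<and> p \<in> P \<and> rel q p}" (is "wf ?R")
proof (rule finite_acyclic_wf)
  show "finite ?R"
    by (rule finite_subset[of _ "P \<times> P"]) (use assms(1) in auto)
  have "trans ?R"
    using assms(2) unfolding strict_poset_def trans_def by blast
  then show "acyclic ?R"
    using assms(2) unfolding strict_poset_def acyclic_def by (auto simp: trancl_id)
qed

lemma sorted_wrt_snoc_trans:
  assumes trans: "\<And>a b c. a \<in> S \<Longrightarrow> b \<in> S \<Longrightarrow> c \<in> S \<Longrightarrow> r a b \<Longrightarrow> r b c \<Longrightarrow> r a c"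
    and "sorted_wrt r xs" "xs \<noteq> []" "set xs \<subseteq> S" "y \<in> S" "r (last xs) y"
  shows "sorted_wrt r (xs @ [y])"
  using assms(2-)
proof (induction xs)
  case (Cons a xs)
  show ?case
  proof (cases "xs = []")
    case False
    have "r a (last xs)" "last xs \<in> S"
      using Cons.prems(1,3) False by auto
    with trans[of a "last xs" y] have "r a y"
      using Cons.prems(3-5) False by simp
    moreover have "sorted_wrt r (xs @ [y])"
      using Cons False by simp
    ultimately show ?thesis
      using Cons.prems(1) by simp
  qed (use Cons.prems in simp)
qed simp

lemma sum_list_nonneg_Ints:
  fixes f :: "'a \<Rightarrow> 'b :: linordered_idom"
  shows "(\<And>z. z \<in> set xs \<Longrightarrow> f z \<in> \<int> \<and> 0 \<le> f z) \<Longrightarrow>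
     sum_list (map f xs) \<in> \<int> \<and> 0 \<le> sum_list (map f xs)"
  by (induction xs) (auto intro: Ints_add)

text \<open>Only the partition part of admissibility is used: the bijection below does not need
  that no element of \<open>U\<^sub>1\<close> lies below one of \<open>U\<^sub>2\<close>.\<close>

locale decomposed_marked_poset =
  fixes P A U1 U2 :: "'a set" and rel :: "'a \<Rightarrow> 'a \<Rightarrow> bool" and lam :: "'a \<Rightarrow> nat"
  assumes marked: "marked_poset P rel A"
    and admissible: "admissible_decomp P rel A U1 U2"
begin

lemma finite_P: "finite P"
  using marked unfolding marked_poset_def by blast

lemma strict_poset: "strict_poset P rel"
  using marked unfolding marked_poset_def by blast

lemma rel_trans: "p \<in> P \<Longrightarrow> q \<in> P \<Longrightarrow> r \<in> P \<Longrightarrow> rel p q \<Longrightarrow> rel q r \<Longrightarrow> rel p r"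
  using strict_poset unfolding strict_poset_def by blast

lemma A_subset: "A \<subseteq> P"
  using marked unfolding marked_poset_def by blast

lemma U1_U2_disjoint: "U1 \<inter> U2 = {}"
  and U1_Un_U2: "U1 \<union> U2 = P - A"
  using admissible unfolding admissible_decomp_def by blast+

lemma U1_subset: "U1 \<subseteq> P - A"
  and U2_subset: "U2 \<subseteq> P - A"
  using U1_Un_U2 by auto

lemma A_Un_U1_not_U2: "a \<in> A \<union> U1 \<Longrightarrow> a \<notin> U2"
  using U1_U2_disjoint U2_subset by blast

abbreviation order_pts :: "('a \<Rightarrow> real) set" where
  "order_pts \<equiv> lattice_points_CO P rel A lam (P - A) {}"

abbreviation chain_order_pts :: "('a \<Rightarrow> real) set" where
  "chain_order_pts \<equiv> lattice_points_CO P rel A lam U1 U2"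

definition below :: "'a \<Rightarrow> 'a set" where
  "below p = {q \<in> P. rel q p}"

lemma finite_below: "finite (below p)"
  unfolding below_def using finite_P by simp

lemma below_nonempty: "p \<in> P - A \<Longrightarrow> below p \<noteq> {}"
  using marked unfolding marked_poset_def minimal_elem_def below_def by blast

definition U2_chain :: "'a list \<Rightarrow> bool" where
  "U2_chain ps \<longleftrightarrow> ps \<noteq> [] \<and> set ps \<subseteq> U2 \<and> sorted_wrt rel ps"

lemma U2_chain_hd: "U2_chain ps \<Longrightarrow> hd ps \<in> P - A"
  and U2_chain_last: "U2_chain ps \<Longrightarrow> last ps \<in> P - A"
  using U2_subset hd_in_set last_in_set unfolding U2_chain_def by blast+

lemma U2_chain_snoc:
  assumes "U2_chain ps" "p \<in> U2" "rel (last ps) p"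
  shows "U2_chain (ps @ [p])"
proof -
  have "set ps \<subseteq> P" "p \<in> P"
    using assms(1,2) U2_subset unfolding U2_chain_def by auto
  then have "sorted_wrt rel (ps @ [p])"
    using assms unfolding U2_chain_def
    by (intro sorted_wrt_snoc_trans[where S = P]) (auto intro: rel_trans)
  then show ?thesis
    using assms unfolding U2_chain_def by simp
qed

definition ext_marking :: "('a \<Rightarrow> real) \<Rightarrow> 'a \<Rightarrow> real" where
  "ext_marking y q = (if q \<in> A then real (lam q) else y q)"

lemma mval_eq_ext_marking: "a \<in> A \<union> U1 \<Longrightarrow> mval U1 lam x a = ext_marking x a"
  using U1_Un_U2 unfolding mval_def ext_marking_def by auto

lemma order_pts_iff:
  "y \<in> order_pts \<longleftrightarrow>
     (\<forall>p. p \<notin> P - A \<longrightarrow> y p = 0) \<and> (\<forall>p\<in>P - A. y p \<in> \<int> \<and> 0 \<le> y p) \<and>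
     (\<forall>p\<in>P. \<forall>q\<in>P. rel p q \<longrightarrow> p \<notin> A \<or> q \<notin> A \<longrightarrow> ext_marking y p \<le> ext_marking y q)"
  using A_subset unfolding lattice_points_CO_def chain_order_polytope_def ext_marking_def by auto

lemma chain_order_pts_iff:
  "x \<in> chain_order_pts \<longleftrightarrow>
     (\<forall>p. p \<notin> P - A \<longrightarrow> x p = 0) \<and> (\<forall>p\<in>P - A. x p \<in> \<int> \<and> 0 \<le> x p) \<and>
     (\<forall>p\<in>A \<union> U1. \<forall>q\<in>A \<union> U1. rel p q \<longrightarrow> p \<notin> A \<or> q \<notin> A \<longrightarrow>
        ext_marking x p \<le> ext_marking x q) \<and>
     (\<forall>ps a b. U2_chain ps \<and> a \<in> A \<union> U1 \<and> b \<in> A \<union> U1 \<and> rel b (hd ps) \<and> rel (last ps) a \<longrightarrow>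
        sum_list (map x ps) \<le> ext_marking x a - ext_marking x b) \<and>
     (\<forall>ps q. U2_chain ps \<and> q \<in> U1 \<and> rel (last ps) q \<longrightarrow> sum_list (map x ps) \<le> x q)"
proof -
  have mono:
    "(\<forall>p\<in>U1. \<forall>a\<in>A. rel p a \<longrightarrow> x p \<le> real (lam a)) \<and>
     (\<forall>q\<in>U1. \<forall>b\<in>A. rel b q \<longrightarrow> real (lam b) \<le> x q) \<and>
     (\<forall>p\<in>U1. \<forall>q\<in>U1. rel p q \<longrightarrow> x p \<le> x q) \<longleftrightarrow>
     (\<forall>p\<in>A \<union> U1. \<forall>q\<in>A \<union> U1. rel p q \<longrightarrow> p \<notin> A \<or> q \<notin> A \<longrightarrow>
        ext_marking x p \<le> ext_marking x q)"
    using U1_subset unfolding ext_marking_def by auto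
  have chains:
    "(\<forall>ps a b. ps \<noteq> [] \<and> set ps \<subseteq> U2 \<and> sorted_wrt rel ps \<and>
        a \<in> A \<union> U1 \<and> b \<in> A \<union> U1 \<and> rel b (hd ps) \<and> rel (last ps) a \<longrightarrow>
        sum_list (map x ps) \<le> mval U1 lam x a - mval U1 lam x b) \<longleftrightarrow>
     (\<forall>ps a b. U2_chain ps \<and> a \<in> A \<union> U1 \<and> b \<in> A \<union> U1 \<and> rel b (hd ps) \<and> rel (last ps) a \<longrightarrow>
        sum_list (map x ps) \<le> ext_marking x a - ext_marking x b)"
    unfolding U2_chain_def by (simp add: mval_eq_ext_marking conj_assoc)
  show ?thesis
    unfolding lattice_points_CO_def chain_order_polytope_def mem_Collect_eq mono[symmetric] chains[symmetric]
    using U2_subset by (auto simp: U2_chain_def)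
qed

context
  fixes x assumes x: "x \<in> chain_order_pts"
begin

lemma chain_order_pts_zero: "p \<notin> P - A \<Longrightarrow> x p = 0"
  and chain_order_pts_nonneg_Ints: "p \<in> P - A \<Longrightarrow> x p \<in> \<int> \<and> 0 \<le> x p"
  and chain_order_pts_mono: "p \<in> A \<union> U1 \<Longrightarrow> q \<in> A \<union> U1 \<Longrightarrow> rel p q \<Longrightarrow> p \<notin> A \<or> q \<notin> A \<Longrightarrow>
        ext_marking x p \<le> ext_marking x q"
  and chain_order_pts_chain_bound: "U2_chain ps \<Longrightarrow> a \<in> A \<union> U1 \<Longrightarrow> b \<in> A \<union> U1 \<Longrightarrow>
        rel b (hd ps) \<Longrightarrow> rel (last ps) a \<Longrightarrow>
        sum_list (map x ps) \<le> ext_marking x a - ext_marking x b"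
  using x unfolding chain_order_pts_iff by blast+

end

context
  fixes y assumes y: "y \<in> order_pts"
begin

lemma order_pts_zero: "p \<notin> P - A \<Longrightarrow> y p = 0"
  and order_pts_nonneg_Ints: "p \<in> P - A \<Longrightarrow> y p \<in> \<int> \<and> 0 \<le> y p"
  and order_pts_mono: "p \<in> P \<Longrightarrow> q \<in> P \<Longrightarrow> rel p q \<Longrightarrow> p \<notin> A \<or> q \<notin> A \<Longrightarrow>
        ext_marking y p \<le> ext_marking y q"
  using y unfolding order_pts_iff by blast+

end

lemma ext_marking_nonneg_Ints:
  assumes "\<forall>p\<in>P - A. y p \<in> \<int> \<and> 0 \<le> y p" "q \<in> P"
  shows "ext_marking y q \<in> \<int> \<and> 0 \<le> ext_marking y q"
  using assms unfolding ext_marking_def by auto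

lemma Max_below_attained: "p \<in> P - A \<Longrightarrow> \<exists>q\<in>below p. Max (f ` below p) = f q"
  using Max_in[of "f ` below p"] finite_below below_nonempty by fastforce

abbreviation prec :: "('a \<times> 'a) set" where
  "prec \<equiv> {(q, p). q \<in> P \<and> p \<in> P \<and> rel q p}"

lemma wf_prec: "wf prec"
  using wf_strict_poset[OF finite_P strict_poset] .

definition transfer_map :: "('a \<Rightarrow> real) \<Rightarrow> 'a \<Rightarrow> real" where
  "transfer_map y p = (if p \<in> U2 then y p - Max (ext_marking y ` below p) else y p)"

definition transfer_inv :: "('a \<Rightarrow> real) \<Rightarrow> 'a \<Rightarrow> real" where
  "transfer_inv x =
     wfrec prec (\<lambda>g p. if p \<in> U2 then x p + Max (ext_marking g ` below p) else x p)"

lemma transfer_inv_eq: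
  "transfer_inv x p =
     (if p \<in> U2 then x p + Max (ext_marking (transfer_inv x) ` below p) else x p)"
proof -
  have "ext_marking (cut (transfer_inv x) prec p) ` below p = ext_marking (transfer_inv x) ` below p"
    if "p \<in> U2"
    using that U2_subset unfolding below_def ext_marking_def
    by (intro image_cong) (auto simp: cut_apply)
  then show ?thesis
    unfolding transfer_inv_def by (subst wfrec[OF wf_prec]) (simp cong: if_cong)
qed

lemma ext_marking_transfer_map: "q \<notin> U2 \<Longrightarrow> ext_marking (transfer_map y) q = ext_marking y q"
  unfolding ext_marking_def transfer_map_def by simp

lemma ext_marking_transfer_inv: "q \<notin> U2 \<Longrightarrow> ext_marking (transfer_inv x) q = ext_marking x q"
  unfolding ext_marking_def by (simp add: transfer_inv_eq)

lemma transfer_map_transfer_inv: "transfer_map (transfer_inv x) = x"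
proof
  fix p
  show "transfer_map (transfer_inv x) p = x p"
    using transfer_inv_eq[of x p] unfolding transfer_map_def by simp
qed

lemma transfer_inv_transfer_map: "transfer_inv (transfer_map y) = y"
proof
  fix p
  show "transfer_inv (transfer_map y) p = y p"
  proof (induction p rule: wf_induct[OF wf_prec])
    case (1 p)
    show ?case
    proof (cases "p \<in> U2")
      case True
      have "ext_marking (transfer_inv (transfer_map y)) ` below p = ext_marking y ` below p"
        using 1 True U1_Un_U2 unfolding below_def ext_marking_def by (intro image_cong) auto
      then show ?thesis
        using True transfer_inv_eq[of "transfer_map y" p] by (simp add: transfer_map_def[of y p])
    qed (simp add: transfer_inv_eq transfer_map_def)
  qed
qed

lemma transfer_inv_chain:
  "p \<in> U2 \<Longrightarrow> \<exists>ps b. U2_chain ps \<and> last ps = p \<and> b \<in> A \<union> U1 \<and> rel b (hd ps) \<and>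
     transfer_inv x p = ext_marking x b + sum_list (map x ps)"
proof (induction p rule: wf_induct[OF wf_prec])
  case (1 p)
  then have p: "p \<in> P - A"
    using U2_subset by blast
  then obtain q where q: "q \<in> below p"
    and max_q: "Max (ext_marking (transfer_inv x) ` below p) = ext_marking (transfer_inv x) q"
    using Max_below_attained by blast
  have "q \<in> P" "rel q p"
    using q unfolding below_def by auto
  have tinv_p: "transfer_inv x p = x p + ext_marking (transfer_inv x) q"
    using transfer_inv_eq[of x p] "1.prems" max_q by simp
  show ?case
  proof (cases "q \<in> U2")
    case True
    then obtain ps b where ps: "U2_chain ps" "last ps = q" "b \<in> A \<union> U1" "rel b (hd ps)"
      and tinv_q: "transfer_inv x q = ext_marking x b + sum_list (map x ps)"
      using "1.IH" \<open>q \<in> P\<close> \<open>rel q p\<close> p by blast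
    have "ext_marking (transfer_inv x) q = transfer_inv x q"
      using True U2_subset unfolding ext_marking_def by auto
    then have "transfer_inv x p = ext_marking x b + sum_list (map x (ps @ [p]))"
      using tinv_p tinv_q by simp
    moreover have "U2_chain (ps @ [p])"
      using U2_chain_snoc ps "1.prems" \<open>rel q p\<close> by simp
    ultimately show ?thesis
      using ps U2_chain_def by (intro exI[of _ "ps @ [p]"] exI[of _ b]) auto
  next
    case False
    then have "q \<in> A \<union> U1"
      using \<open>q \<in> P\<close> U1_Un_U2 by blast
    moreover have "transfer_inv x p = ext_marking x q + sum_list (map x [p])"
      using tinv_p ext_marking_transfer_inv[OF False] by simp
    ultimately show ?thesis
      using "1.prems" \<open>rel q p\<close> unfolding U2_chain_def
      by (intro exI[of _ "[p]"] exI[of _ q]) auto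
  qed
qed

lemma transfer_inv_nonneg_Ints:
  assumes x: "x \<in> chain_order_pts" and p: "p \<in> P - A"
  shows "transfer_inv x p \<in> \<int> \<and> 0 \<le> transfer_inv x p"
proof (cases "p \<in> U2")
  case True
  then obtain ps b where ps: "U2_chain ps" and b: "b \<in> A \<union> U1"
    and tinv_p: "transfer_inv x p = ext_marking x b + sum_list (map x ps)"
    using transfer_inv_chain by blast
  have "ext_marking x b \<in> \<int> \<and> 0 \<le> ext_marking x b"
    using b A_subset U1_subset chain_order_pts_nonneg_Ints[OF x]
    by (intro ext_marking_nonneg_Ints) auto
  moreover have "sum_list (map x ps) \<in> \<int> \<and> 0 \<le> sum_list (map x ps)"
    using ps U2_subset chain_order_pts_nonneg_Ints[OF x] unfolding U2_chain_def
    by (intro sum_list_nonneg_Ints) auto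
  ultimately show ?thesis
    using tinv_p by auto
next
  case False
  then show ?thesis
    using chain_order_pts_nonneg_Ints[OF x p] transfer_inv_eq[of x p] by simp
qed

lemma transfer_inv_mono:
  assumes x: "x \<in> chain_order_pts" and "p \<in> P" "q \<in> P" "rel p q" "p \<notin> A \<or> q \<notin> A"
  shows "ext_marking (transfer_inv x) p \<le> ext_marking (transfer_inv x) q"
proof (cases "q \<in> U2")
  case True
  have "ext_marking (transfer_inv x) p \<le> Max (ext_marking (transfer_inv x) ` below q)"
    using assms(2,4) finite_below unfolding below_def by (intro Max_ge) auto
  moreover have "0 \<le> x q"
    using chain_order_pts_nonneg_Ints[OF x] True U2_subset by blast
  ultimately show ?thesis
    using True U2_subset transfer_inv_eq[of x q] unfolding ext_marking_def by auto
next
  case q: False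
  then have "q \<in> A \<union> U1"
    using assms(3) U1_Un_U2 by blast
  show ?thesis
  proof (cases "p \<in> U2")
    case True
    then obtain ps b where "U2_chain ps" "last ps = p" "b \<in> A \<union> U1" "rel b (hd ps)"
      and "transfer_inv x p = ext_marking x b + sum_list (map x ps)"
      using transfer_inv_chain by blast
    moreover have "ext_marking (transfer_inv x) p = transfer_inv x p"
      using True U2_subset unfolding ext_marking_def by auto
    ultimately show ?thesis
      using chain_order_pts_chain_bound[OF x, of ps q b] \<open>q \<in> A \<union> U1\<close> \<open>rel p q\<close>
        ext_marking_transfer_inv[OF q] by simp
  next
    case False
    then have "p \<in> A \<union> U1"
      using assms(2) U1_Un_U2 by blast
    then show ?thesis
      using chain_order_pts_mono[OF x] \<open>q \<in> A \<union> U1\<close> assms(4,5)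
        ext_marking_transfer_inv[OF q] ext_marking_transfer_inv[OF False] by simp
  qed
qed

lemma transfer_inv_in_order_pts:
  assumes x: "x \<in> chain_order_pts"
  shows "transfer_inv x \<in> order_pts"
  unfolding order_pts_iff
proof (intro conjI allI ballI impI)
  fix p assume "p \<notin> P - A"
  then show "transfer_inv x p = 0"
    using chain_order_pts_zero[OF x] U2_subset transfer_inv_eq[of x p] by auto
qed (use transfer_inv_nonneg_Ints[OF x] transfer_inv_mono[OF x] in auto)

lemma transfer_map_telescope:
  "U2_chain ps \<Longrightarrow> b \<in> P \<Longrightarrow> rel b (hd ps) \<Longrightarrow>
     sum_list (map (transfer_map y) ps) \<le> y (last ps) - ext_marking y b"
proof (induction ps arbitrary: b)
  case (Cons q ps)
  have q: "q \<in> U2"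
    using Cons.prems(1) unfolding U2_chain_def by simp
  have "ext_marking y b \<le> Max (ext_marking y ` below q)"
    using Cons.prems(2,3) finite_below unfolding below_def by (intro Max_ge) auto
  then have step: "transfer_map y q \<le> y q - ext_marking y b"
    using q unfolding transfer_map_def by simp
  show ?case
  proof (cases "ps = []")
    case False
    have "ext_marking y q = y q" "q \<in> P"
      using q U2_subset unfolding ext_marking_def by auto
    moreover have "U2_chain ps" "rel q (hd ps)"
      using Cons.prems(1) False unfolding U2_chain_def by (cases ps; auto)+
    ultimately show ?thesis
      using Cons.IH[of q] step False by simp
  qed (use step in simp)
qed (simp add: U2_chain_def)

lemma Max_below_le:
  assumes y: "y \<in> order_pts" and p: "p \<in> P - A"
  shows "Max (ext_marking y ` below p) \<le> y p"
  using order_pts_mono[OF y] p finite_below below_nonempty[OF p]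
  unfolding below_def ext_marking_def by (intro Max.boundedI) force+

lemma transfer_map_chain_bound:
  assumes y: "y \<in> order_pts" and ps: "U2_chain ps"
    and "b \<in> P" "rel b (hd ps)" "a \<in> P" "rel (last ps) a"
  shows "sum_list (map (transfer_map y) ps) \<le> ext_marking y a - ext_marking y b"
proof -
  have "last ps \<in> P - A"
    using U2_chain_last[OF ps] .
  then have "y (last ps) \<le> ext_marking y a"
    using order_pts_mono[OF y, of "last ps" a] assms(5,6) unfolding ext_marking_def by auto
  then show ?thesis
    using transfer_map_telescope[OF ps assms(3,4), of y] by simp
qed

lemma transfer_map_in_chain_order_pts:
  assumes y: "y \<in> order_pts"
  shows "transfer_map y \<in> chain_order_pts"
  unfolding chain_order_pts_iff
proof (intro conjI allI ballI impI)
  fix p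
  assume "p \<notin> P - A"
  then show "transfer_map y p = 0"
    using order_pts_zero[OF y] U2_subset unfolding transfer_map_def by auto
next
  fix p assume p: "p \<in> P - A"
  obtain q where "q \<in> below p" "Max (ext_marking y ` below p) = ext_marking y q"
    using Max_below_attained[OF p] by blast
  then have "Max (ext_marking y ` below p) \<in> \<int>"
    using ext_marking_nonneg_Ints[of y q] order_pts_nonneg_Ints[OF y] unfolding below_def by auto
  then show "transfer_map y p \<in> \<int>" "0 \<le> transfer_map y p"
    using Max_below_le[OF y p] order_pts_nonneg_Ints[OF y p] unfolding transfer_map_def by auto
next
  fix p q assume "p \<in> A \<union> U1" "q \<in> A \<union> U1" "rel p q" "p \<notin> A \<or> q \<notin> A"
  then show "ext_marking (transfer_map y) p \<le> ext_marking (transfer_map y) q"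
    using order_pts_mono[OF y] A_subset U1_subset A_Un_U1_not_U2 ext_marking_transfer_map by auto
next
  fix ps a b
  assume "U2_chain ps \<and> a \<in> A \<union> U1 \<and> b \<in> A \<union> U1 \<and> rel b (hd ps) \<and> rel (last ps) a"
  then show "sum_list (map (transfer_map y) ps)
      \<le> ext_marking (transfer_map y) a - ext_marking (transfer_map y) b"
    using transfer_map_chain_bound[OF y, of ps b a] A_subset U1_subset A_Un_U1_not_U2
      ext_marking_transfer_map by auto
next
  fix ps q assume chain: "U2_chain ps \<and> q \<in> U1 \<and> rel (last ps) q"
  then obtain b where b: "b \<in> P" "rel b (hd ps)"
    using U2_chain_hd below_nonempty unfolding below_def by blast
  have "0 \<le> ext_marking y b"
    using ext_marking_nonneg_Ints[of y b] order_pts_nonneg_Ints[OF y] b by auto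
  moreover have "ext_marking y q = transfer_map y q"
    using chain U1_subset U1_U2_disjoint unfolding ext_marking_def transfer_map_def by auto
  ultimately show "sum_list (map (transfer_map y) ps) \<le> transfer_map y q"
    using transfer_map_chain_bound[OF y, of ps b q] chain b U1_subset by auto
qed

lemma card_chain_order_pts: "card chain_order_pts = card order_pts"
proof -
  have "bij_betw transfer_map order_pts chain_order_pts"
    using transfer_map_in_chain_order_pts transfer_inv_in_order_pts
      transfer_inv_transfer_map transfer_map_transfer_inv
    by (intro bij_betw_byWitness[where f' = transfer_inv]) auto
  then show ?thesis
    by (simp add: bij_betw_same_card)
qed

end

theorem theorem3p1:
  fixes P A U1 U2 :: "'a set" and rel :: "'a \<Rightarrow> 'a \<Rightarrow> bool" and lam :: "'a \<Rightarrow> nat"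
  assumes "marked_poset P rel A"
    and "admissible_decomp P rel A U1 U2"
  shows "\<forall>n::nat. card (lattice_points_CO P rel A (\<lambda>a. n * lam a) U1 U2)
           = card (lattice_points_CO P rel A (\<lambda>a. n * lam a) (P - A) {})"
proof
  fix n :: nat
  interpret decomposed_marked_poset P A U1 U2 rel "\<lambda>a. n * lam a"
    using assms by unfold_locales
  show "card (lattice_points_CO P rel A (\<lambda>a. n * lam a) U1 U2)
      = card (lattice_points_CO P rel A (\<lambda>a. n * lam a) (P - A) {})"
    by (rule card_chain_order_pts)
qed

end
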